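(* Let $\Gamma\subseteq\mathbb R^n$ be an open convex set, $S\subseteq\Gamma$ a nonempty convex set, and $f:\Gamma\to\mathbb R$ a continuously differentiable function that is quasiconvex on $\Gamma$. Let $\bar S=\arg\min\{f(x)\mid x\in S\}$ be nonempty. Then exactly one of the following alternatives holds: (I) $\nabla f(x)\ne 0$ for all $x\in\bar S$, and the normalized gradient $\nabla f(x)/\|\nabla f(x)\|$ is constant over $\bar S$; (II) $\nabla f(x)=0$ for all $x\in\bar S$.
   Context: A function $f:\Gamma\to\mathbb R$ on a convex set $\Gamma\subseteq\mathbb R^n$ is quasiconvex on $\Gamma$ iff $f(x+t(y-x))\le\max\{f(x),f(y)\}$ for all $x,y\in\Gamma$ and $t\in[0,1]$. *)

theory Defs
  imports "HOL-Analysis.Analysis"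
begin

definition quasiconvex_on :: "'a::real_vector set \<Rightarrow> ('a \<Rightarrow> real) \<Rightarrow> bool" where
  "quasiconvex_on \<Gamma> f \<longleftrightarrow>
     (\<forall>x\<in>\<Gamma>. \<forall>y\<in>\<Gamma>. \<forall>t::real. 0 \<le> t \<and> t \<le> 1 \<longrightarrow> f (x + t *\<^sub>R (y - x)) \<le> max (f x) (f y))"

definition argmin_on :: "('a \<Rightarrow> real) \<Rightarrow> 'a set \<Rightarrow> 'a set" where
  "argmin_on f S = {x \<in> S. \<forall>y\<in>S. f x \<le> f y}"

end

theory Submission
  imports Defs
begin

text \<open>If \<open>x\<close> and \<open>y\<close> minimize \<open>f\<close> over \<open>S\<close>, so does every point \<open>z\<close> of the segment
  between them, and quasiconvexity along the segment bounds the slope of \<open>f\<close> at \<open>z\<close> in any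
  direction \<open>w\<close> by the positive part of its slope at \<open>x\<close>. So the half-space
  \<open>{w. \<nabla>f(x) \<bullet> w \<le> 0}\<close> lies in \<open>{w. \<nabla>f(z) \<bullet> w \<le> 0}\<close>, and by continuity of \<open>\<nabla>f\<close> in
  \<open>{w. \<nabla>f(y) \<bullet> w \<le> 0}\<close>. Nonzero vectors with nested half-spaces have the same direction,
  and a vanishing gradient at one minimizer forces all of them to vanish.\<close>

lemma has_derivative_difference_quotient_at_right:
  fixes f :: "'a::real_inner \<Rightarrow> real"
  assumes "(f has_derivative (\<lambda>h. D \<bullet> h)) (at x)"
  shows "((\<lambda>s. (f (x + s *\<^sub>R v) - f x) / s) \<longlongrightarrow> D \<bullet> v) (at_right 0)"
proof -
  have "((\<lambda>s. x + s *\<^sub>R v) has_derivative (\<lambda>s. s *\<^sub>R v)) (at 0)"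
    by (auto intro!: derivative_eq_intros)
  moreover have "(f has_derivative (\<lambda>h. D \<bullet> h)) (at (x + 0 *\<^sub>R v))"
    using assms by simp
  ultimately have "((\<lambda>s. f (x + s *\<^sub>R v)) has_derivative (\<lambda>s. D \<bullet> (s *\<^sub>R v))) (at 0)"
    by (rule has_derivative_compose)
  then have "((\<lambda>s. f (x + s *\<^sub>R v)) has_field_derivative (D \<bullet> v)) (at 0)"
    unfolding has_field_derivative_def by (rule has_derivative_eq_rhs) (auto simp: fun_eq_iff)
  then have "((\<lambda>s. (f (x + s *\<^sub>R v) - f x) / s) \<longlongrightarrow> D \<bullet> v) (at 0)"
    unfolding DERIV_def by simp
  then show ?thesis
    by (rule tendsto_mono[OF at_le[OF subset_UNIV]])
qed

lemma convex_argmin_on: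
  assumes "convex S" "S \<subseteq> \<Gamma>" "quasiconvex_on \<Gamma> f"
  shows "convex (argmin_on f S)"
proof (rule convexI)
  fix x y and u v :: real
  assume x: "x \<in> argmin_on f S" and y: "y \<in> argmin_on f S" and uv: "0 \<le> u" "0 \<le> v" "u + v = 1"
  then have xS: "x \<in> S" and yS: "y \<in> S" and min: "\<And>t. t \<in> S \<Longrightarrow> f x \<le> f t \<and> f y \<le> f t"
    by (auto simp: argmin_on_def)
  have zS: "u *\<^sub>R x + v *\<^sub>R y \<in> S"
    using convexD[OF assms(1) xS yS uv] .
  have "u *\<^sub>R x + v *\<^sub>R y = x + v *\<^sub>R (y - x)"
    using uv by (simp add: algebra_simps flip: scaleR_add_left)
  moreover have "x \<in> \<Gamma>" "y \<in> \<Gamma>" "v \<le> 1"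
    using assms(2) xS yS uv by auto
  then have "f (x + v *\<^sub>R (y - x)) \<le> max (f x) (f y)"
    using assms(3) uv(2) unfolding quasiconvex_on_def by blast
  ultimately have "f (u *\<^sub>R x + v *\<^sub>R y) \<le> max (f x) (f y)"
    by simp
  then show "u *\<^sub>R x + v *\<^sub>R y \<in> argmin_on f S"
    using zS min by (force simp: argmin_on_def)
qed

lemma quasiconvex_on_slope_bound:
  fixes f :: "'a::real_inner \<Rightarrow> real"
  assumes "open \<Gamma>" "quasiconvex_on \<Gamma> f" "x \<in> \<Gamma>" "y \<in> \<Gamma>" "f y \<le> f x"
    and l: "0 \<le> l" "l \<le> 1" and fz: "f x \<le> f (x + l *\<^sub>R (y - x))"
    and Dx: "(f has_derivative (\<lambda>h. D \<bullet> h)) (at x)"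
    and Dz: "(f has_derivative (\<lambda>h. E \<bullet> h)) (at (x + l *\<^sub>R (y - x)))"
  shows "(1 - l) * (E \<bullet> w) \<le> max (D \<bullet> w) 0"
proof -
  define z where "z = x + l *\<^sub>R (y - x)"
  define v where "v = (1 - l) *\<^sub>R w"
  have fxz: "f x \<le> f z"
    using fz by (simp add: z_def)
  have "((\<lambda>s. x + s *\<^sub>R w) \<longlongrightarrow> x + 0 *\<^sub>R w) (at_right (0::real))"
    by (intro tendsto_intros)
  then have "eventually (\<lambda>s. x + s *\<^sub>R w \<in> \<Gamma>) (at_right (0::real))"
    using topological_tendstoD assms(1,3) by fastforce
  then have "eventually (\<lambda>s. (f (z + s *\<^sub>R v) - f z) / s \<le> max ((f (x + s *\<^sub>R w) - f x) / s) 0)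
      (at_right 0)"
    using eventually_at_right_less[of 0]
  proof eventually_elim
    case (elim s)
    define p where "p = x + s *\<^sub>R w"
    have "p + l *\<^sub>R (y - p) = z + s *\<^sub>R v"
      unfolding p_def z_def v_def by (simp add: algebra_simps)
    moreover have "f (p + l *\<^sub>R (y - p)) \<le> max (f p) (f y)"
      using assms(2,4) elim l unfolding quasiconvex_on_def p_def by auto
    ultimately have "f (z + s *\<^sub>R v) \<le> max (f p) (f y)"
      by simp
    then have "f (z + s *\<^sub>R v) - f z \<le> max (f p - f x) 0"
      using assms(5) fxz by linarith
    then have "(f (z + s *\<^sub>R v) - f z) / s \<le> max (f p - f x) 0 / s"
      using elim by (simp add: divide_right_mono)
    also have "\<dots> = max ((f p - f x) / s) 0"
      using elim by (simp add: max_divide_distrib_right)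
    finally show ?case unfolding p_def .
  qed
  moreover have "((\<lambda>s. (f (z + s *\<^sub>R v) - f z) / s) \<longlongrightarrow> E \<bullet> v) (at_right 0)"
    using has_derivative_difference_quotient_at_right Dz unfolding z_def by blast
  moreover have "((\<lambda>s. max ((f (x + s *\<^sub>R w) - f x) / s) 0) \<longlongrightarrow> max (D \<bullet> w) 0) (at_right 0)"
    by (intro tendsto_max has_derivative_difference_quotient_at_right[OF Dx] tendsto_const)
  ultimately have "E \<bullet> v \<le> max (D \<bullet> w) 0"
    by (intro tendsto_le[OF trivial_limit_at_right_real])
  then show ?thesis
    by (simp add: v_def)
qed

lemma argmin_on_gradient_halfspace_mono:
  fixes \<Gamma> S :: "'a::real_inner set" and f :: "'a \<Rightarrow> real" and f' :: "'a \<Rightarrow> 'a"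
  assumes "open \<Gamma>" "S \<subseteq> \<Gamma>" "convex S"
    and der: "\<And>x. x \<in> \<Gamma> \<Longrightarrow> (f has_derivative (\<lambda>h. f' x \<bullet> h)) (at x)"
    and "continuous_on \<Gamma> f'" "quasiconvex_on \<Gamma> f"
    and x: "x \<in> argmin_on f S" and y: "y \<in> argmin_on f S" and w: "f' x \<bullet> w \<le> 0"
  shows "f' y \<bullet> w \<le> 0"
proof -
  have xG: "x \<in> \<Gamma>" and yG: "y \<in> \<Gamma>" and fyx: "f y \<le> f x"
    using x y assms(2) by (auto simp: argmin_on_def)
  have segment: "f' (x + l *\<^sub>R (y - x)) \<bullet> w \<le> 0" if l: "0 \<le> l" "l < 1" for l
  proof -
    have "(1 - l) *\<^sub>R x + l *\<^sub>R y \<in> argmin_on f S"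
      using convexD_alt[OF convex_argmin_on[OF assms(3,2,6)] x y] l by simp
    moreover have "(1 - l) *\<^sub>R x + l *\<^sub>R y = x + l *\<^sub>R (y - x)"
      by (simp add: algebra_simps)
    ultimately have zmin: "x + l *\<^sub>R (y - x) \<in> argmin_on f S" by simp
    then have "f x \<le> f (x + l *\<^sub>R (y - x))"
      using x by (auto simp: argmin_on_def)
    moreover have "x + l *\<^sub>R (y - x) \<in> \<Gamma>"
      using zmin assms(2) by (auto simp: argmin_on_def)
    ultimately have "(1 - l) * (f' (x + l *\<^sub>R (y - x)) \<bullet> w) \<le> max (f' x \<bullet> w) 0"
      using quasiconvex_on_slope_bound[OF assms(1,6) xG yG fyx] l der xG by simp
    then show ?thesis
      using w l by (simp add: mult_le_0_iff)
  qed
  have cont: "isCont f' y"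
    using assms(1,5) yG by (simp add: continuous_on_eq_continuous_at)
  have "((\<lambda>l. x + l *\<^sub>R (y - x)) \<longlongrightarrow> x + 1 *\<^sub>R (y - x)) (at_left (1::real))"
    by (intro tendsto_intros)
  then have "((\<lambda>l. x + l *\<^sub>R (y - x)) \<longlongrightarrow> y) (at_left (1::real))"
    by simp
  then have "((\<lambda>l. f' (x + l *\<^sub>R (y - x)) \<bullet> w) \<longlongrightarrow> f' y \<bullet> w) (at_left (1::real))"
    by (intro tendsto_inner tendsto_const isCont_tendsto_compose[OF cont])
  moreover have "eventually (\<lambda>l. f' (x + l *\<^sub>R (y - x)) \<bullet> w \<le> 0) (at_left (1::real))"
    by (rule eventually_at_leftI[of 0]) (auto intro: segment)
  ultimately show ?thesis
    by (rule tendsto_upperbound) (simp add: trivial_limit_at_left_real)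
qed

lemma unit_vector_eq_if_halfspace_subset:
  fixes g h :: "'a::real_inner"
  assumes "g \<noteq> 0" "h \<noteq> 0" and halfspace: "\<And>w. h \<bullet> w \<le> 0 \<Longrightarrow> g \<bullet> w \<le> 0"
  shows "g /\<^sub>R norm g = h /\<^sub>R norm h"
proof -
  have "g \<bullet> h \<ge> 0"
    using halfspace[of "- h"] by simp
  \<comment> \<open>the direction below is orthogonal to \<open>h\<close>; the resulting bound reverses Cauchy-Schwarz\<close>
  moreover have "g \<bullet> ((h \<bullet> h) *\<^sub>R g - (g \<bullet> h) *\<^sub>R h) \<le> 0"
    by (rule halfspace) (simp add: inner_diff_right inner_commute[of h g])
  then have "(h \<bullet> h) * (g \<bullet> g) \<le> (g \<bullet> h)\<^sup>2"
    by (simp add: inner_diff_right power2_eq_square mult.commute)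
  then have "(norm g * norm h)\<^sup>2 \<le> (g \<bullet> h)\<^sup>2"
    by (simp add: power_mult_distrib power2_norm_eq_inner mult.commute)
  ultimately have "norm g * norm h \<le> g \<bullet> h"
    by (simp add: power2_le_iff_abs_le)
  then have "g \<bullet> h = norm g * norm h"
    using Cauchy_Schwarz_ineq2[of g h] by auto
  then have collinear: "norm g *\<^sub>R h = norm h *\<^sub>R g"
    by (simp add: norm_cauchy_schwarz_eq)
  have "g /\<^sub>R norm g = inverse (norm g * norm h) *\<^sub>R (norm h *\<^sub>R g)"
    using assms(2) by simp
  also have "\<dots> = inverse (norm g * norm h) *\<^sub>R (norm g *\<^sub>R h)"
    by (simp only: collinear)
  also have "\<dots> = h /\<^sub>R norm h"
    using assms(1) by simp
  finally show ?thesis .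
qed

theorem lemma6:
  fixes \<Gamma> S :: "'a::euclidean_space set" and f :: "'a \<Rightarrow> real" and f' :: "'a \<Rightarrow> 'a"
  assumes "open \<Gamma>" and "convex \<Gamma>"
    and "S \<subseteq> \<Gamma>" and "S \<noteq> {}" and "convex S"
    and "\<And>x. x \<in> \<Gamma> \<Longrightarrow> (f has_derivative (\<lambda>h. f' x \<bullet> h)) (at x)"
    and "continuous_on \<Gamma> f'"
    and "quasiconvex_on \<Gamma> f"
    and "argmin_on f S \<noteq> {}"
  shows "((\<forall>x\<in>argmin_on f S. f' x \<noteq> 0) \<and>
           (\<exists>u. \<forall>x\<in>argmin_on f S. f' x /\<^sub>R norm (f' x) = u))
         \<noteq> (\<forall>x\<in>argmin_on f S. f' x = 0)"
proof (cases "\<forall>x\<in>argmin_on f S. f' x = 0")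
  case True
  then show ?thesis using assms(9) by auto
next
  case False
  then obtain b where b: "b \<in> argmin_on f S" "f' b \<noteq> 0" by auto
  have halfspace: "f' y \<bullet> w \<le> 0"
    if "x \<in> argmin_on f S" "y \<in> argmin_on f S" "f' x \<bullet> w \<le> 0" for x y w
    using argmin_on_gradient_halfspace_mono[OF assms(1,3,5) _ assms(7,8) that] assms(6) by blast
  have nonzero: "f' x \<noteq> 0" if "x \<in> argmin_on f S" for x
  proof
    assume "f' x = 0"
    then have "f' b \<bullet> f' b \<le> 0"
      using halfspace[OF that b(1)] by simp
    with b(2) show False
      by (metis inner_gt_zero_iff not_le)
  qed
  have "f' x /\<^sub>R norm (f' x) = f' b /\<^sub>R norm (f' b)" if "x \<in> argmin_on f S" for x
    using unit_vector_eq_if_halfspace_subset[OF nonzero[OF that] b(2)] halfspace[OF b(1) that] by blast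
  then show ?thesis
    using False nonzero by blast
qed

end
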